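(* Let $p\ge 1$, $s>0$ and $\lambda>0$. Let $\tilde{W}\in\mathbb{R}^{p\times p}$. Let $\hat{W}$ be a projection of $\tilde{W}$ onto the $\log\det$ level set $\mathcal{D}_s:=\{W\in\mathbb{W}^s: h_s(W)=0\}$, i.e. $\hat W\in\arg\min_{W\in\mathcal{D}_s}\tfrac12\|\tilde W-W\|_F^2$, and let $W^\star$ be the (Euclidean/Frobenius) projection of $\hat{W}$ onto the $\ell_1$ ball $\mathcal{B}_\lambda:=\{W\in\mathbb{R}^{p\times p}:\|W\|_{\ell_1}\le\lambda\}$. Then $W^\star$ lies in the intersection $\mathcal{D}_s\cap\mathcal{B}_\lambda$, i.e. $W^\star\in\mathbb{W}^s$, $h_s(W^\star)=0$ and $\|W^\star\|_{\ell_1}\le\lambda$.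
   Context: For $W\in\mathbb{R}^{p\times p}$, $W\circ W$ denotes the entrywise (Hadamard) square, $\rho(\cdot)$ the spectral radius, and $\|W\|_{\ell_1}:=\sum_{j,k}|\mathsf{w}_{jk}|$. Define $\mathbb{W}^s:=\{W\in\mathbb{R}^{p\times p}:\rho(W\circ W)<s\}$ and, for $W\in\mathbb{W}^s$, $h_s(W):=-\log\det(sI-W\circ W)+p\log(s)$. (It is known that for $W\in\mathbb{W}^s$, $h_s(W)=0$ iff the directed graph with weighted adjacency matrix $W$ — an edge $j\to k$ iff $\mathsf{w}_{jk}\neq0$ — is acyclic.) *)

theory Defs
  imports Complex_Main "Jordan_Normal_Form.Spectral_Radius"
begin

definition hadamard_sq :: "real mat \<Rightarrow> real mat" where
  "hadamard_sq W = mat (dim_row W) (dim_col W) (\<lambda>(i,j). (W $$ (i,j))^2)"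

definition W_set :: "nat \<Rightarrow> real \<Rightarrow> real mat set" where
  "W_set p s = {W \<in> carrier_mat p p.
      spectral_radius (map_mat complex_of_real (hadamard_sq W)) < s}"

definition h_logdet :: "real \<Rightarrow> real mat \<Rightarrow> real" where
  "h_logdet s W = - ln (det (s \<cdot>\<^sub>m 1\<^sub>m (dim_row W) - hadamard_sq W)) + real (dim_row W) * ln s"

definition l1_norm :: "real mat \<Rightarrow> real" where
  "l1_norm W = (\<Sum>j<dim_row W. \<Sum>k<dim_col W. \<bar>W $$ (j,k)\<bar>)"

definition frob_sq :: "real mat \<Rightarrow> real" where
  "frob_sq W = (\<Sum>j<dim_row W. \<Sum>k<dim_col W. (W $$ (j,k))^2)"

definition D_set :: "nat \<Rightarrow> real \<Rightarrow> real mat set" where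
  "D_set p s = {W \<in> W_set p s. h_logdet s W = 0}"

definition l1_ball :: "nat \<Rightarrow> real \<Rightarrow> real mat set" where
  "l1_ball p lam = {W \<in> carrier_mat p p. l1_norm W \<le> lam}"

definition is_projection :: "real mat set \<Rightarrow> real mat \<Rightarrow> real mat \<Rightarrow> bool" where
  "is_projection C X Y \<longleftrightarrow> Y \<in> C \<and> (\<forall>V\<in>C. frob_sq (X - Y) / 2 \<le> frob_sq (X - V) / 2)"

end

theory Submission
  imports Defs "HOL-Analysis.Complex_Transcendental"
begin

(* Write B for the Hadamard square of W_hat. Since \<rho>(B) < s, the logarithm of det (sI - B) expands as
   p log s - \<Sum>k\<ge>1 tr(B^k) / (k s^k), so h_s(W_hat) is a series of nonnegative terms and
   h_s(W_hat) = 0 forces tr(B^k) = 0 for all k \<ge> 1. Projecting onto an l1 ball never increases the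
   modulus of an entry (resetting such an entry would give a closer point of the ball), so
   0 \<le> W_star \<circ> W_star \<le> B entrywise and all powers of W_star \<circ> W_star are traceless as well.
   A matrix whose powers are all traceless has characteristic polynomial x^p; hence
   \<rho>(W_star \<circ> W_star) = 0 and det (sI - W_star \<circ> W_star) = s^p, i.e. h_s(W_star) = 0. *)

definition mat_trace :: "'a::comm_monoid_add mat \<Rightarrow> 'a" where
  "mat_trace M = (\<Sum>i<dim_row M. M $$ (i,i))"

lemma mat_trace_mult_comm:
  fixes X Y :: "'a::comm_ring_1 mat"
  assumes X: "X \<in> carrier_mat n n" and Y: "Y \<in> carrier_mat n n"
  shows "mat_trace (X * Y) = mat_trace (Y * X)"
proof -
  have "mat_trace (X * Y) = (\<Sum>i<n. \<Sum>j<n. X $$ (i,j) * Y $$ (j,i))"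
    using X Y by (simp add: mat_trace_def scalar_prod_def atLeast0LessThan)
  also have "\<dots> = (\<Sum>j<n. \<Sum>i<n. Y $$ (j,i) * X $$ (i,j))"
    by (subst sum.swap) (simp add: mult.commute)
  also have "\<dots> = mat_trace (Y * X)"
    using X Y by (simp add: mat_trace_def scalar_prod_def atLeast0LessThan)
  finally show ?thesis .
qed

lemma mat_trace_pow_similar_mat_wit:
  fixes M :: "'a::comm_ring_1 mat"
  assumes M: "M \<in> carrier_mat n n" and wit: "similar_mat_wit M T P Q"
  shows "mat_trace (M ^\<^sub>m k) = mat_trace (T ^\<^sub>m k)"
proof -
  from similar_mat_witD2[OF M wit]
  have T: "T \<in> carrier_mat n n" and P: "P \<in> carrier_mat n n" and Q: "Q \<in> carrier_mat n n"
    and QP: "Q * P = 1\<^sub>m n" by auto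
  have Tk: "T ^\<^sub>m k \<in> carrier_mat n n" using T by simp
  have "mat_trace (M ^\<^sub>m k) = mat_trace ((P * T ^\<^sub>m k) * Q)"
    using similar_mat_wit_pow_id[OF wit] by simp
  also have "\<dots> = mat_trace (Q * (P * T ^\<^sub>m k))"
    using P Q Tk by (intro mat_trace_mult_comm) auto
  also have "Q * (P * T ^\<^sub>m k) = T ^\<^sub>m k"
    using P Q Tk QP by (simp add: assoc_mult_mat[symmetric] left_mult_one_mat)
  finally show ?thesis .
qed

lemma mat_trace_map_of_real_pow:
  fixes M :: "real mat"
  assumes M: "M \<in> carrier_mat n n"
  shows "mat_trace (map_mat complex_of_real M ^\<^sub>m k) = of_real (mat_trace (M ^\<^sub>m k))"
  using M by (auto simp: of_real_hom.mat_hom_pow[OF M, symmetric] mat_trace_def intro!: sum.cong)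

lemma upper_triangular_mult:
  fixes A B :: "'a::comm_ring_1 mat"
  assumes A: "A \<in> carrier_mat n n" and B: "B \<in> carrier_mat n n"
    and utA: "upper_triangular A" and utB: "upper_triangular B"
  shows "upper_triangular (A * B)" and "i < n \<Longrightarrow> (A * B) $$ (i,i) = A $$ (i,i) * B $$ (i,i)"
proof -
  have entry: "(A * B) $$ (i,j) = (\<Sum>l<n. A $$ (i,l) * B $$ (l,j))" if "i < n" "j < n" for i j
    using that A B by (simp add: scalar_prod_def atLeast0LessThan)
  have vanish: "A $$ (i,l) * B $$ (l,j) = 0" if "l < i \<or> j < l" "i < n" "l < n" for i j l
    using that A B upper_triangularD[OF utA, of l i] upper_triangularD[OF utB, of j l] by auto
  show "upper_triangular (A * B)"
  proof
    fix i j assume ji: "j < i" and "i < dim_row (A * B)"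
    then have i: "i < n" using A by simp
    have "A $$ (i,l) * B $$ (l,j) = 0" if "l < n" for l
      using ji i that by (cases "l < i") (auto intro: vanish)
    then show "(A * B) $$ (i,j) = 0"
      using ji i entry by (auto intro!: sum.neutral)
  qed
  assume i: "i < n"
  have "(\<Sum>l<n. A $$ (i,l) * B $$ (l,i)) = (\<Sum>l<n. if l = i then A $$ (i,i) * B $$ (i,i) else 0)"
    using i vanish by (intro sum.cong refl) (metis linorder_neqE_nat lessThan_iff)
  then show "(A * B) $$ (i,i) = A $$ (i,i) * B $$ (i,i)"
    using i entry by simp
qed

lemma upper_triangular_pow:
  fixes T :: "'a::comm_ring_1 mat"
  assumes T: "T \<in> carrier_mat n n" and ut: "upper_triangular T"
  shows "upper_triangular (T ^\<^sub>m k) \<and> (\<forall>i<n. (T ^\<^sub>m k) $$ (i,i) = (T $$ (i,i)) ^ k)"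
proof (induction k)
  case 0
  then show ?case using T by auto
next
  case (Suc k)
  have Tk: "T ^\<^sub>m k \<in> carrier_mat n n" using T by simp
  from Suc upper_triangular_mult[OF Tk T _ ut] show ?case
    by (simp add: mult.commute)
qed

lemma mat_trace_pow_char_poly_roots:
  fixes M :: "complex mat"
  assumes M: "M \<in> carrier_mat n n"
    and cp: "char_poly M = (\<Prod>a\<leftarrow>es. [:- a, 1:])" and len: "length es = n"
  shows "mat_trace (M ^\<^sub>m k) = (\<Sum>i<n. (es ! i) ^ k)"
proof -
  obtain T P Q where sd: "schur_decomposition M es = (T,P,Q)"
    by (cases "schur_decomposition M es") auto
  from schur_decomposition[OF M cp sd] have wit: "similar_mat_wit M T P Q"
    and ut: "upper_triangular T" and diag: "diag_mat T = es" by auto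
  have T: "T \<in> carrier_mat n n" using similar_mat_witD2[OF M wit] by auto
  have "mat_trace (M ^\<^sub>m k) = mat_trace (T ^\<^sub>m k)"
    by (rule mat_trace_pow_similar_mat_wit[OF M wit])
  also have "\<dots> = (\<Sum>i<n. (T $$ (i,i)) ^ k)"
    using T upper_triangular_pow[OF T ut, of k] by (simp add: mat_trace_def)
  also have "\<dots> = (\<Sum>i<n. (es ! i) ^ k)"
    using diag T by (auto simp: diag_mat_def)
  finally show ?thesis .
qed

lemma char_poly_exp_trace_series:
  fixes M :: "complex mat" and z :: complex
  assumes M: "M \<in> carrier_mat n n" and z: "z \<noteq> 0"
    and roots: "\<And>x. poly (char_poly M) x = 0 \<Longrightarrow> cmod x < cmod z"
  shows "\<exists>S. (\<lambda>k. mat_trace (M ^\<^sub>m k) / (of_nat k * z ^ k)) sums S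
     \<and> poly (char_poly M) z = z ^ n * exp (- S)"
proof -
  obtain es where cp: "char_poly M = (\<Prod>a\<leftarrow>es. [:- a, 1:])" and len: "length es = n"
    using char_poly_factorized[OF M] by auto
  define w where "w i = es ! i / z" for i
  have w_lt_1: "cmod (w i) < 1" if "i < n" for i
  proof -
    have "poly (char_poly M) (es ! i) = 0"
      unfolding cp using that len by (intro linear_poly_root) simp
    then show ?thesis using roots z by (simp add: w_def norm_divide)
  qed
  have "(\<lambda>k. \<Sum>i<n. - ((w i) ^ k) / of_nat k) sums (\<Sum>i<n. Ln (1 - w i))"
    using Ln_series'[of "- w _"] w_lt_1 by (intro sums_sum) simp
  moreover have "(\<Sum>i<n. - ((w i) ^ k) / of_nat k) = - (mat_trace (M ^\<^sub>m k) / (of_nat k * z ^ k))" for k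
    unfolding mat_trace_pow_char_poly_roots[OF M cp len] w_def
    by (simp add: power_divide sum_divide_distrib[symmetric] sum_negf divide_divide_eq_left mult.commute)
  ultimately have series:
    "(\<lambda>k. mat_trace (M ^\<^sub>m k) / (of_nat k * z ^ k)) sums (- (\<Sum>i<n. Ln (1 - w i)))"
    using sums_minus by fastforce
  have "poly (char_poly M) z = (\<Prod>i<n. z - es ! i)"
    unfolding cp poly_prod_list by (simp add: o_def prod.list_conv_set_nth len atLeast0LessThan)
  also have "\<dots> = (\<Prod>i<n. z * exp (Ln (1 - w i)))"
  proof (intro prod.cong refl)
    fix i assume "i \<in> {..<n}"
    then have "1 - w i \<noteq> 0" using w_lt_1[of i] by auto
    then show "z - es ! i = z * exp (Ln (1 - w i))" using z by (simp add: w_def field_simps)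
  qed
  also have "\<dots> = z ^ n * exp (- (- (\<Sum>i<n. Ln (1 - w i))))"
    by (simp add: prod.distrib exp_sum)
  finally show ?thesis using series by blast
qed

lemma char_poly_root_norm_le_spectral_radius:
  assumes A: "A \<in> carrier_mat n n" and root: "poly (char_poly A) x = 0"
  shows "cmod x \<le> spectral_radius A"
proof -
  have mem: "x \<in> spectrum A" using root spectrum_root_char_poly[OF A] by simp
  with card_finite_spectrum[OF A] have "n > 0" by (cases n) auto
  with mem show ?thesis using spectral_radius_mem_max(2)[OF A] by blast
qed

lemma char_poly_eq_monom_if_pow_traces_zero:
  fixes A :: "complex mat"
  assumes A: "A \<in> carrier_mat n n"
    and traceless: "\<And>k. k \<ge> 1 \<Longrightarrow> mat_trace (A ^\<^sub>m k) = 0"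
  shows "char_poly A = monom 1 n"
proof -
  define R where "R = max 0 (spectral_radius A)"
  have value_large: "poly (char_poly A) (of_real r) = of_real r ^ n" if r: "r > R" for r
  proof -
    have roots: "cmod x < cmod (complex_of_real r)" if "poly (char_poly A) x = 0" for x
      using char_poly_root_norm_le_spectral_radius[OF A that] r by (simp add: R_def)
    have "r \<noteq> 0" using r by (simp add: R_def)
    from char_poly_exp_trace_series[OF A _ roots] this obtain S where
      S: "(\<lambda>k. mat_trace (A ^\<^sub>m k) / (of_nat k * of_real r ^ k)) sums S"
      and P: "poly (char_poly A) (of_real r) = of_real r ^ n * exp (- S)" by auto
    have "(\<lambda>k. mat_trace (A ^\<^sub>m k) / (of_nat k * of_real r ^ k)) = (\<lambda>k. 0)"
    proof
      fix k
      show "mat_trace (A ^\<^sub>m k) / (of_nat k * of_real r ^ k) = 0"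
        using traceless[of k] by (cases "k = 0") simp_all
    qed
    with S have "S = 0" using sums_unique sums_zero by metis
    with P show ?thesis by simp
  qed
  let ?q = "char_poly A - monom 1 n"
  have "complex_of_real ` {R<..} \<subseteq> {x. poly ?q x = 0}"
    using value_large by (auto simp: poly_monom)
  moreover have "infinite (complex_of_real ` {R<..})"
    using finite_imageD[of complex_of_real "{R<..}"] by (auto simp: inj_on_def infinite_Ioi)
  ultimately have "infinite {x. poly ?q x = 0}" using finite_subset by blast
  then have "?q = 0" using poly_roots_finite by blast
  then show ?thesis by simp
qed

lemma of_real_det_scalar_minus:
  fixes M :: "real mat"
  assumes M: "M \<in> carrier_mat n n"
  shows "complex_of_real (det (s \<cdot>\<^sub>m 1\<^sub>m n - M)) = poly (char_poly (map_mat complex_of_real M)) (of_real s)"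
proof -
  have "- char_matrix M s = s \<cdot>\<^sub>m 1\<^sub>m n - M"
    using M by (intro eq_matI) (auto simp: char_matrix_def)
  then have "poly (char_poly M) s = det (s \<cdot>\<^sub>m 1\<^sub>m n - M)"
    using char_poly_matrix[OF M] by simp
  then show ?thesis by (simp add: of_real_hom.char_poly_hom[OF M])
qed

lemma det_scalar_minus_exp_trace_series:
  fixes B :: "real mat"
  assumes B: "B \<in> carrier_mat n n" and s: "s > 0"
    and radius: "spectral_radius (map_mat complex_of_real B) < s"
  shows "\<exists>S. (\<lambda>k. mat_trace (B ^\<^sub>m k) / (of_nat k * s ^ k)) sums S
     \<and> det (s \<cdot>\<^sub>m 1\<^sub>m n - B) = s ^ n * exp (- S)"
proof -
  let ?Bc = "map_mat complex_of_real B"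
  have Bc: "?Bc \<in> carrier_mat n n" using B by simp
  have roots: "cmod x < cmod (complex_of_real s)" if "poly (char_poly ?Bc) x = 0" for x
    using char_poly_root_norm_le_spectral_radius[OF Bc that] radius s by simp
  from char_poly_exp_trace_series[OF Bc _ roots] s obtain S where
    S: "(\<lambda>k. complex_of_real (mat_trace (B ^\<^sub>m k) / (of_nat k * s ^ k))) sums S"
    and P: "poly (char_poly ?Bc) (of_real s) = of_real s ^ n * exp (- S)"
    by (auto simp: mat_trace_map_of_real_pow[OF B])
  have "(\<lambda>k. 0) sums Im S" using sums_Im[OF S] by simp
  then have "S = of_real (Re S)" by (simp add: complex_eq_iff sums_iff)
  then have "exp (- S) = of_real (exp (- Re S))" by (metis exp_of_real of_real_minus)
  then have "complex_of_real (det (s \<cdot>\<^sub>m 1\<^sub>m n - B)) = of_real (s ^ n * exp (- Re S))"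
    using of_real_det_scalar_minus[OF B] P by simp
  then have "det (s \<cdot>\<^sub>m 1\<^sub>m n - B) = s ^ n * exp (- Re S)"
    by (simp only: of_real_eq_iff)
  then show ?thesis using sums_Re[OF S] by auto
qed

lemma mat_pow_mono_nonneg:
  fixes A B :: "'a::linordered_semidom mat"
  assumes A: "A \<in> carrier_mat n n" and B: "B \<in> carrier_mat n n"
    and le: "\<And>i j. i < n \<Longrightarrow> j < n \<Longrightarrow> 0 \<le> A $$ (i,j) \<and> A $$ (i,j) \<le> B $$ (i,j)"
    and i: "i < n" and j: "j < n"
  shows "0 \<le> (A ^\<^sub>m k) $$ (i,j) \<and> (A ^\<^sub>m k) $$ (i,j) \<le> (B ^\<^sub>m k) $$ (i,j)"
  using j
proof (induction k arbitrary: j)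
  case 0
  then show ?case using A B i by simp
next
  case (Suc k)
  have Ak: "A ^\<^sub>m k \<in> carrier_mat n n" and Bk: "B ^\<^sub>m k \<in> carrier_mat n n" using A B by auto
  have "0 \<le> (A ^\<^sub>m k) $$ (i,l) * A $$ (l,j)
      \<and> (A ^\<^sub>m k) $$ (i,l) * A $$ (l,j) \<le> (B ^\<^sub>m k) $$ (i,l) * B $$ (l,j)" if l: "l < n" for l
    using Suc.IH[OF l] le[OF l Suc.prems] by (auto intro: mult_mono)
  then show ?case
    using Suc.prems i A B Ak Bk
    by (auto simp: scalar_prod_def atLeast0LessThan intro: sum_nonneg sum_mono)
qed

lemma mat_trace_pow_mono_nonneg:
  fixes A B :: "'a::linordered_semidom mat"
  assumes A: "A \<in> carrier_mat n n" and B: "B \<in> carrier_mat n n"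
    and le: "\<And>i j. i < n \<Longrightarrow> j < n \<Longrightarrow> 0 \<le> A $$ (i,j) \<and> A $$ (i,j) \<le> B $$ (i,j)"
  shows "0 \<le> mat_trace (A ^\<^sub>m k) \<and> mat_trace (A ^\<^sub>m k) \<le> mat_trace (B ^\<^sub>m k)"
  using mat_pow_mono_nonneg[OF A B le] A B
  by (auto simp: mat_trace_def intro: sum_nonneg sum_mono)

lemma hadamard_sq_carrier: "W \<in> carrier_mat p p \<Longrightarrow> hadamard_sq W \<in> carrier_mat p p"
  by (simp add: hadamard_sq_def)

lemma hadamard_sq_index: "i < dim_row W \<Longrightarrow> j < dim_col W \<Longrightarrow> hadamard_sq W $$ (i,j) = (W $$ (i,j))^2"
  by (simp add: hadamard_sq_def)

lemma h_logdet_trace_series: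
  assumes W: "W \<in> W_set p s" and s: "s > 0"
  shows "(\<lambda>k. mat_trace (hadamard_sq W ^\<^sub>m k) / (of_nat k * s ^ k)) sums h_logdet s W"
proof -
  have Wc: "W \<in> carrier_mat p p"
    and radius: "spectral_radius (map_mat complex_of_real (hadamard_sq W)) < s"
    using W by (auto simp: W_set_def)
  from det_scalar_minus_exp_trace_series[OF hadamard_sq_carrier[OF Wc] s radius] obtain S where
    "(\<lambda>k. mat_trace (hadamard_sq W ^\<^sub>m k) / (of_nat k * s ^ k)) sums S"
    and "det (s \<cdot>\<^sub>m 1\<^sub>m p - hadamard_sq W) = s ^ p * exp (- S)" by blast
  moreover from this(2) have "h_logdet s W = S"
    using Wc s by (simp add: h_logdet_def ln_mult ln_realpow)
  ultimately show ?thesis by simp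
qed

lemma D_set_pow_traces_zero:
  assumes W: "W \<in> D_set p s" and s: "s > 0" and k: "k \<ge> 1"
  shows "mat_trace (hadamard_sq W ^\<^sub>m k) = 0"
proof -
  have Wc: "W \<in> carrier_mat p p" and h: "h_logdet s W = 0" and WW: "W \<in> W_set p s"
    using W by (auto simp: D_set_def W_set_def)
  have hc: "hadamard_sq W \<in> carrier_mat p p" using hadamard_sq_carrier[OF Wc] .
  have nonneg_entries: "0 \<le> hadamard_sq W $$ (i,j)" if "i < p" "j < p" for i j
    using that Wc by (simp add: hadamard_sq_index)
  have terms_nonneg: "0 \<le> mat_trace (hadamard_sq W ^\<^sub>m k) / (of_nat k * s ^ k)" for k
    using mat_trace_pow_mono_nonneg[OF hc hc] nonneg_entries s by simp
  note series = h_logdet_trace_series[OF WW s, unfolded h]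
  have "mat_trace (hadamard_sq W ^\<^sub>m k) / (of_nat k * s ^ k) = 0"
    using suminf_eq_zero_iff[OF sums_summable[OF series] terms_nonneg] sums_unique[OF series] by metis
  then show ?thesis using k s by simp
qed

lemma pow_traces_zero_imp_D_set:
  assumes W: "W \<in> carrier_mat p p" and p: "p > 0" and s: "s > 0"
    and traceless: "\<And>k. k \<ge> 1 \<Longrightarrow> mat_trace (hadamard_sq W ^\<^sub>m k) = 0"
  shows "W \<in> D_set p s"
proof -
  let ?A = "hadamard_sq W"
  have A: "?A \<in> carrier_mat p p" using hadamard_sq_carrier[OF W] .
  have cp: "char_poly (map_mat complex_of_real ?A) = monom 1 p"
    using A traceless by (intro char_poly_eq_monom_if_pow_traces_zero) (auto simp: mat_trace_map_of_real_pow)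
  have "spectrum (map_mat complex_of_real ?A) = {0}"
    using spectrum_root_char_poly[of "map_mat complex_of_real ?A" p] A cp p by (auto simp: poly_monom)
  then have "spectral_radius (map_mat complex_of_real ?A) = 0"
    by (simp add: spectral_radius_def)
  moreover have "det (s \<cdot>\<^sub>m 1\<^sub>m p - ?A) = s ^ p"
    using of_real_det_scalar_minus[OF A, of s] cp by (simp add: poly_monom flip: of_real_power)
  ultimately show ?thesis
    using W s by (simp add: D_set_def W_set_def h_logdet_def ln_realpow)
qed

lemma sum_sum_eq_except_one:
  fixes f g :: "nat \<Rightarrow> nat \<Rightarrow> real"
  assumes i: "i < p" and j: "j < p"
    and eq: "\<And>a b. a < p \<Longrightarrow> b < p \<Longrightarrow> (a, b) \<noteq> (i, j) \<Longrightarrow> g a b = f a b"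
  shows "(\<Sum>a<p. \<Sum>b<p. g a b) = (\<Sum>a<p. \<Sum>b<p. f a b) + (g i j - f i j)"
proof -
  have "(\<Sum>a<p. \<Sum>b<p. g a b) - (\<Sum>a<p. \<Sum>b<p. f a b) = (\<Sum>a<p. \<Sum>b<p. g a b - f a b)"
    by (simp add: sum_subtractf)
  also have "\<dots> = (\<Sum>a<p. \<Sum>b<p. if a = i then (if b = j then g i j - f i j else 0) else 0)"
    using eq by (intro sum.cong refl) auto
  also have "\<dots> = (\<Sum>a<p. if a = i then g i j - f i j else 0)"
    using j by (intro sum.cong refl) auto
  also have "\<dots> = g i j - f i j" using i by simp
  finally show ?thesis by simp
qed

lemma l1_ball_projection_abs_le:
  assumes W: "W \<in> carrier_mat p p" and proj: "is_projection (l1_ball p lam) W V"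
    and i: "i < p" and j: "j < p"
  shows "\<bar>V $$ (i,j)\<bar> \<le> \<bar>W $$ (i,j)\<bar>"
proof (rule ccontr)
  assume "\<not> ?thesis"
  then have larger: "\<bar>W $$ (i,j)\<bar> < \<bar>V $$ (i,j)\<bar>" by simp
  from proj have V: "V \<in> carrier_mat p p" and V_l1: "l1_norm V \<le> lam"
    and closest: "\<And>U. U \<in> l1_ball p lam \<Longrightarrow> frob_sq (W - V) \<le> frob_sq (W - U)"
    unfolding is_projection_def l1_ball_def by auto
  define U where "U = Matrix.mat p p (\<lambda>(a,b). if (a, b) = (i, j) then W $$ (i,j) else V $$ (a,b))"
  have U: "U \<in> carrier_mat p p" unfolding U_def by simp
  have "l1_norm U = l1_norm V + (\<bar>W $$ (i,j)\<bar> - \<bar>V $$ (i,j)\<bar>)"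
    unfolding l1_norm_def using U V i j
    by (simp, subst sum_sum_eq_except_one[OF i j]) (auto simp: U_def)
  then have "U \<in> l1_ball p lam" using U V_l1 larger by (simp add: l1_ball_def)
  moreover have "frob_sq (W - U) = frob_sq (W - V) - (W $$ (i,j) - V $$ (i,j))^2"
    unfolding frob_sq_def using W U V i j
    by (simp, subst sum_sum_eq_except_one[OF i j]) (auto simp: U_def)
  moreover have "W $$ (i,j) \<noteq> V $$ (i,j)" using larger by auto
  ultimately show False using closest by fastforce
qed

theorem proposition1:
  fixes p :: nat and s lam :: real and W_tilde W_hat W_star :: "real mat"
  assumes "p \<ge> 1" and "s > 0" and "lam > 0"
    and "W_tilde \<in> carrier_mat p p"
    and "is_projection (D_set p s) W_tilde W_hat"
    and "is_projection (l1_ball p lam) W_hat W_star"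
  shows "W_star \<in> W_set p s \<and> h_logdet s W_star = 0 \<and> l1_norm W_star \<le> lam"
proof -
  have W_hat: "W_hat \<in> D_set p s" and W_hat_carrier: "W_hat \<in> carrier_mat p p"
    using assms(5) by (auto simp: is_projection_def D_set_def W_set_def)
  have W_star: "W_star \<in> carrier_mat p p" and l1: "l1_norm W_star \<le> lam"
    using assms(6) by (auto simp: is_projection_def l1_ball_def)
  have dominated: "0 \<le> hadamard_sq W_star $$ (i,j) \<and> hadamard_sq W_star $$ (i,j) \<le> hadamard_sq W_hat $$ (i,j)"
    if "i < p" "j < p" for i j
    using l1_ball_projection_abs_le[OF W_hat_carrier assms(6) that] that W_star W_hat_carrier
    by (simp add: hadamard_sq_index abs_le_square_iff)
  have "mat_trace (hadamard_sq W_star ^\<^sub>m k) = 0" if "k \<ge> 1" for k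
    using mat_trace_pow_mono_nonneg[OF hadamard_sq_carrier[OF W_star] hadamard_sq_carrier[OF W_hat_carrier]
        dominated, of k]
      D_set_pow_traces_zero[OF W_hat \<open>s > 0\<close> that] by simp
  then have "W_star \<in> D_set p s"
    using pow_traces_zero_imp_D_set W_star assms(1,2) by simp
  with l1 show ?thesis by (simp add: D_set_def)
qed

end
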